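(* Let $n,k,r$ be integers with $k,r\geq 2$, $n\geq 2k$ and $k<r$. Then every vertex-$k$-maximal $r$-uniform hypergraph $H$ on $n$ vertices satisfies $|E(H)|=\binom{n}{r}-\binom{n-k}{r}$.
   Context: Binomial coefficients satisfy $\binom{a}{b}=0$ when $b>a$. A hypergraph $H=(V,E)$ consists of a finite vertex set $V$ and a set $E$ of non-empty subsets of $V$ (edges); it is $r$-uniform if all edges have exactly $r$ elements. The complement $H^c$ has as edges the $r$-subsets of $V$ not in $E$. A subhypergraph is $H'=(V',E')$ with $V'\subseteq V$, $E'\subseteq E$. $H+e=(V,E\cup\{e\})$ for $e\in E(H^c)$. $H-Y$ is the hypergraph induced on $V\setminus Y$ (keeping edges contained in $V\setminus Y$). Connectedness is defined via paths (alternating sequences of distinct vertices and distinct edges with consecutive vertices in the intermediate edge). A vertex-cut is a set $X$ with $H-X$ disconnected. $\kappa(H)$ is the minimum size of a vertex-cut if one exists, and $|V(H)|-1$ otherwise. $\overline{\kappa}(H)=\max\{\kappa(H'): H'\subseteq H\}$. An $r$-uniform hypergraph $H$ is vertex-$k$-maximal if $\overline{\kappa}(H)\leq k$ but $\overline{\kappa}(H+e)\geq k+1$ for every $e\in E(H^c)$. *)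

theory Defs
  imports Main
begin

type_synonym 'a hgraph = "'a set \<times> 'a set set"

definition verts :: "'a hgraph \<Rightarrow> 'a set" where "verts H = fst H"
definition edges :: "'a hgraph \<Rightarrow> 'a set set" where "edges H = snd H"

definition hypergraph :: "'a hgraph \<Rightarrow> bool" where
  "hypergraph H \<longleftrightarrow> finite (verts H) \<and> (\<forall>e\<in>edges H. e \<noteq> {} \<and> e \<subseteq> verts H)"

definition uniform :: "nat \<Rightarrow> 'a hgraph \<Rightarrow> bool" where
  "uniform r H \<longleftrightarrow> (\<forall>e\<in>edges H. card e = r)"

definition compl_edges :: "nat \<Rightarrow> 'a hgraph \<Rightarrow> 'a set set" where
  "compl_edges r H = {e. e \<subseteq> verts H \<and> card e = r} - edges H"

definition subhypergraph :: "'a hgraph \<Rightarrow> 'a hgraph \<Rightarrow> bool" where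
  "subhypergraph H' H \<longleftrightarrow> hypergraph H' \<and> verts H' \<subseteq> verts H \<and> edges H' \<subseteq> edges H"

definition add_edge :: "'a set \<Rightarrow> 'a hgraph \<Rightarrow> 'a hgraph" where
  "add_edge e H = (verts H, insert e (edges H))"

definition del_verts :: "'a hgraph \<Rightarrow> 'a set \<Rightarrow> 'a hgraph" where
  "del_verts H Y = (verts H - Y, {e \<in> edges H. e \<subseteq> verts H - Y})"

definition is_path :: "'a hgraph \<Rightarrow> 'a list \<Rightarrow> 'a set list \<Rightarrow> bool" where
  "is_path H vs es \<longleftrightarrow> length vs = Suc (length es) \<and> set vs \<subseteq> verts H \<and> set es \<subseteq> edges H
     \<and> distinct vs \<and> distinct es
     \<and> (\<forall>i < length es. vs ! i \<in> es ! i \<and> vs ! Suc i \<in> es ! i)"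

definition connected_hg :: "'a hgraph \<Rightarrow> bool" where
  "connected_hg H \<longleftrightarrow> (\<forall>u\<in>verts H. \<forall>w\<in>verts H.
      \<exists>vs es. is_path H vs es \<and> hd vs = u \<and> last vs = w)"

definition vertex_cut :: "'a hgraph \<Rightarrow> 'a set \<Rightarrow> bool" where
  "vertex_cut H X \<longleftrightarrow> X \<subseteq> verts H \<and> \<not> connected_hg (del_verts H X)"

definition kappa :: "'a hgraph \<Rightarrow> nat" where
  "kappa H = (if \<exists>X. vertex_cut H X then Min {card X | X. vertex_cut H X}
              else card (verts H) - 1)"

definition kappa_bar :: "'a hgraph \<Rightarrow> nat" where
  "kappa_bar H = Max {kappa H' | H'. subhypergraph H' H}"

definition vertex_k_maximal :: "nat \<Rightarrow> nat \<Rightarrow> 'a hgraph \<Rightarrow> bool" where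
  "vertex_k_maximal k r H \<longleftrightarrow> hypergraph H \<and> uniform r H \<and> kappa_bar H \<le> k \<and>
     (\<forall>e\<in>compl_edges r H. kappa_bar (add_edge e H) \<ge> k + 1)"

end

theory Submission
  imports Defs
begin

text \<open>Induction on the number of vertices. With fewer than k + r vertices every r-uniform
  hypergraph has connectivity at most k, so maximality makes H complete. Otherwise a minimum
  vertex cut X of H splits the remaining vertices into sides A and B with no edge between them.
  Maximality forces |X| = k (else an r-set joining A and B could be added), makes H - B and
  H - A vertex-k-maximal, and puts every r-set meeting X, A and B into E(H): adding such a set
  creates no subhypergraph that X fails to cut. The edges of H - B, of H - A and these crossing
  sets partition E(H) exactly as the corresponding r-sets partition the r-sets meeting X, of
  which there are C(n,r) - C(n-k,r).\<close>

lemma verts_del_verts [simp]: "verts (del_verts H Y) = verts H - Y"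
  by (simp add: verts_def del_verts_def)

lemma edges_del_verts [simp]: "edges (del_verts H Y) = {e \<in> edges H. e \<subseteq> verts H - Y}"
  by (simp add: edges_def del_verts_def)

lemma verts_add_edge [simp]: "verts (add_edge e H) = verts H"
  by (simp add: verts_def add_edge_def)

lemma edges_add_edge [simp]: "edges (add_edge e H) = insert e (edges H)"
  by (simp add: edges_def add_edge_def)

lemma hypergraph_add_edge:
  "hypergraph H \<Longrightarrow> e \<subseteq> verts H \<Longrightarrow> e \<noteq> {} \<Longrightarrow> hypergraph (add_edge e H)"
  by (auto simp: hypergraph_def)

lemma hypergraph_del_verts: "hypergraph H \<Longrightarrow> hypergraph (del_verts H Y)"
  by (auto simp: hypergraph_def)

lemma subhypergraph_refl: "hypergraph H \<Longrightarrow> subhypergraph H H"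
  by (simp add: subhypergraph_def)

lemma subhypergraph_edge_subset: "subhypergraph H' H \<Longrightarrow> f \<in> edges H' \<Longrightarrow> f \<subseteq> verts H'"
  by (auto simp: subhypergraph_def hypergraph_def)

subsection \<open>Paths and reachability\<close>

definition reachable :: "'a hgraph \<Rightarrow> 'a \<Rightarrow> 'a \<Rightarrow> bool" where
  "reachable G u y \<longleftrightarrow> (\<exists>vs es. is_path G vs es \<and> hd vs = u \<and> last vs = y)"

lemma connected_hg_iff_reachable:
  "connected_hg G \<longleftrightarrow> (\<forall>u\<in>verts G. \<forall>w\<in>verts G. reachable G u w)"
  by (simp add: connected_hg_def reachable_def)

lemma reachable_refl: "u \<in> verts G \<Longrightarrow> reachable G u u"
  unfolding reachable_def by (rule exI[of _ "[u]"], rule exI[of _ "[]"]) (simp add: is_path_def)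

lemma is_path_last: "is_path G vs es \<Longrightarrow> last vs = vs ! length es"
  by (cases vs rule: rev_cases) (auto simp: is_path_def nth_append)

lemma is_path_take:
  assumes "is_path G vs es" "i \<le> length es"
  shows "is_path G (take (Suc i) vs) (take i es)"
  using assms unfolding is_path_def by (auto dest: in_set_takeD)

lemma reachable_along_path:
  assumes P: "is_path G vs es" and y: "y \<in> set vs"
  shows "reachable G (hd vs) y"
proof -
  have L: "length vs = Suc (length es)" using P by (simp add: is_path_def)
  obtain i where i: "i < length vs" "vs ! i = y" using y by (auto simp: in_set_conv_nth)
  have "is_path G (take (Suc i) vs) (take i es)" using P i L by (intro is_path_take) auto
  moreover have "hd (take (Suc i) vs) = hd vs" using i by (cases vs) auto
  moreover have "last (take (Suc i) vs) = y" using i by (simp add: take_Suc_conv_app_nth)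
  ultimately show ?thesis unfolding reachable_def by blast
qed

lemma is_path_snoc:
  assumes P: "is_path G vs es" and e: "e \<in> edges G" "e \<notin> set es" "last vs \<in> e"
    and y: "y \<in> e" "y \<in> verts G" "y \<notin> set vs"
  shows "is_path G (vs @ [y]) (es @ [e])"
proof -
  have L: "length vs = Suc (length es)" using P by (simp add: is_path_def)
  show ?thesis
    using P e y L is_path_last[OF P] unfolding is_path_def by (auto simp: nth_append less_Suc_eq)
qed

text \<open>Cutting the path at its first vertex in f keeps its edges distinct.\<close>
lemma reachable_through_edge:
  assumes x: "reachable G u x" and f: "f \<in> edges G" "x \<in> f" and y: "y \<in> f" "y \<in> verts G"
  shows "reachable G u y"
proof -
  obtain vs es where P: "is_path G vs es" "hd vs = u" "last vs = x"
    using x by (auto simp: reachable_def)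
  have L: "length vs = Suc (length es)" using P by (simp add: is_path_def)
  have ex: "vs ! length es \<in> f" using P f is_path_last by metis
  define j where "j = (LEAST j. vs ! j \<in> f)"
  have j: "vs ! j \<in> f" "j \<le> length es" "\<And>i. i < j \<Longrightarrow> vs ! i \<notin> f"
    unfolding j_def using LeastI[where P="\<lambda>j. vs ! j \<in> f", OF ex]
      Least_le[where P="\<lambda>j. vs ! j \<in> f", OF ex] not_less_Least by auto
  define vs' es' where "vs' = take (Suc j) vs" and "es' = take j es"
  have P': "is_path G vs' es'" unfolding vs'_def es'_def using P j by (intro is_path_take) auto
  have hd': "hd vs' = u" using P L by (cases vs) (auto simp: vs'_def)
  show ?thesis
  proof (cases "y \<in> set vs'")
    case True then show ?thesis using reachable_along_path[OF P'] hd' by simp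
  next
    case False
    have "f \<notin> set es'"
    proof
      assume "f \<in> set es'"
      then obtain i where "i < j" "es ! i = f" using j by (auto simp: es'_def in_set_conv_nth)
      moreover have "vs ! i \<in> es ! i" using P \<open>i < j\<close> j by (auto simp: is_path_def)
      ultimately show False using j by auto
    qed
    moreover have "last vs' = vs ! j" using j L by (simp add: vs'_def take_Suc_conv_app_nth)
    ultimately have "is_path G (vs' @ [y]) (es' @ [f])"
      using is_path_snoc[OF P' f(1)] j y False by simp
    moreover have "vs' \<noteq> []" using P' by (auto simp: is_path_def)
    ultimately show ?thesis using hd' unfolding reachable_def by (metis hd_append2 last_snoc)
  qed
qed

lemma reachable_closed:
  assumes "reachable G u y" "\<forall>f\<in>edges G. f \<subseteq> A \<or> f \<inter> A = {}" "u \<in> A"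
  shows "y \<in> A"
proof -
  obtain vs es where P: "is_path G vs es" "hd vs = u" "last vs = y"
    using assms(1) by (auto simp: reachable_def)
  have L: "length vs = Suc (length es)" using P by (simp add: is_path_def)
  have "vs ! i \<in> A" if "i \<le> length es" for i
    using that
  proof (induction i)
    case 0 then show ?case using P assms(3) L by (cases vs) auto
  next
    case (Suc i)
    then have "es ! i \<in> edges G" "vs ! i \<in> es ! i" "vs ! Suc i \<in> es ! i"
      using P by (auto simp: is_path_def)
    then show ?case using Suc assms(2) by auto
  qed
  then show ?thesis using P is_path_last by fastforce
qed

subsection \<open>Vertex cuts and connectivity\<close>

lemma vertex_cut_card:
  assumes "finite (verts G)" "vertex_cut G Y"
  shows "card Y + 2 \<le> card (verts G)"
proof -
  have Y: "Y \<subseteq> verts G" and "\<not> connected_hg (del_verts G Y)"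
    using assms(2) by (auto simp: vertex_cut_def)
  then obtain u w where uw: "u \<in> verts G - Y" "w \<in> verts G - Y" "\<not> reachable (del_verts G Y) u w"
    by (auto simp: connected_hg_iff_reachable)
  then have "u \<noteq> w" using reachable_refl[of u "del_verts G Y"] by auto
  then have "card {u, w} \<le> card (verts G - Y)" using uw assms(1) by (intro card_mono) auto
  then show ?thesis using \<open>u \<noteq> w\<close> Y assms(1) by (simp add: card_Diff_subset finite_subset)
qed

lemma finite_cut_sizes: "finite (verts G) \<Longrightarrow> finite {card X | X. vertex_cut G X}"
  by (rule finite_subset[of _ "{..card (verts G)}"]) (auto simp: vertex_cut_def intro: card_mono)

lemma kappa_le_vertex_cut:
  assumes "finite (verts G)" "vertex_cut G Y"
  shows "kappa G \<le> card Y"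
  using assms finite_cut_sizes[OF assms(1)] by (auto simp: kappa_def intro!: Min_le)

lemma kappa_le_card_verts:
  assumes "finite (verts G)"
  shows "kappa G \<le> card (verts G) - 1"
proof (cases "\<exists>Y. vertex_cut G Y")
  case True
  then obtain Y where "vertex_cut G Y" by blast
  then show ?thesis using kappa_le_vertex_cut[OF assms] vertex_cut_card[OF assms] by fastforce
qed (simp add: kappa_def)

lemma minimum_vertex_cut_exists:
  assumes "finite (verts G)" "kappa G < card (verts G) - 1"
  obtains Y where "vertex_cut G Y" "card Y = kappa G"
proof -
  have ex: "\<exists>X. vertex_cut G X" using assms(2) by (auto simp: kappa_def split: if_splits)
  then have "kappa G = Min {card X | X. vertex_cut G X}" by (simp add: kappa_def)
  also have "\<dots> \<in> {card X | X. vertex_cut G X}"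
    using finite_cut_sizes[OF assms(1)] ex by (intro Min_in) auto
  finally show ?thesis using that by auto
qed

lemma vertex_cutI:
  assumes "Y \<subseteq> verts G" "a \<in> verts G - Y" "b \<in> verts G - Y" "a \<in> A" "b \<notin> A"
    and "\<forall>f\<in>edges G. f \<subseteq> verts G - Y \<longrightarrow> f \<subseteq> A \<or> f \<inter> A = {}"
  shows "vertex_cut G Y"
  using assms reachable_closed[of "del_verts G Y" a b A]
  by (auto simp: vertex_cut_def connected_hg_iff_reachable)

subsection \<open>Maximum connectivity of subhypergraphs\<close>

lemma kappa_bar_finite:
  assumes "hypergraph G"
  shows "finite {kappa H' | H'. subhypergraph H' G}"
proof (rule finite_subset[of _ "{..card (verts G)}"])
  have "kappa H' \<le> card (verts G)" if "subhypergraph H' G" for H'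
  proof -
    have "finite (verts H')" "verts H' \<subseteq> verts G" "finite (verts G)"
      using that assms by (auto simp: subhypergraph_def hypergraph_def)
    then show ?thesis using kappa_le_card_verts[of H'] card_mono[of "verts G" "verts H'"] by linarith
  qed
  then show "{kappa H' | H'. subhypergraph H' G} \<subseteq> {..card (verts G)}" by auto
qed simp

lemma kappa_le_kappa_bar:
  assumes "hypergraph G" "subhypergraph H' G"
  shows "kappa H' \<le> kappa_bar G"
  unfolding kappa_bar_def using kappa_bar_finite[OF assms(1)] assms(2) by (blast intro: Max_ge)

lemma kappa_bar_attained:
  assumes "hypergraph G"
  obtains H' where "subhypergraph H' G" "kappa H' = kappa_bar G"
proof -
  have "kappa_bar G \<in> {kappa H' | H'. subhypergraph H' G}"
    unfolding kappa_bar_def using kappa_bar_finite[OF assms] subhypergraph_refl[OF assms]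
    by (intro Max_in) blast+
  then show ?thesis using that by (auto simp del: kappa_bar_def)
qed

subsection \<open>Separations\<close>

definition separates :: "'a hgraph \<Rightarrow> 'a set \<Rightarrow> 'a set \<Rightarrow> 'a set \<Rightarrow> bool" where
  "separates G X A B \<longleftrightarrow> X \<subseteq> verts G \<and> A \<inter> B = {} \<and> A \<union> B = verts G - X \<and>
     (\<forall>f\<in>edges G. f \<subseteq> verts G - X \<longrightarrow> f \<subseteq> A \<or> f \<subseteq> B)"

lemma separates_sym: "separates G X A B \<Longrightarrow> separates G X B A"
  by (auto simp: separates_def)

lemma separates_add_edge:
  "separates H X A B \<Longrightarrow> (e \<subseteq> verts H - X \<Longrightarrow> e \<subseteq> A \<or> e \<subseteq> B) \<Longrightarrow> separates (add_edge e H) X A B"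
  by (auto simp: separates_def)

lemma separates_insert:
  "separates G X A B \<Longrightarrow> u \<in> A \<Longrightarrow> separates G (insert u X) (A - {u}) B"
  unfolding separates_def by auto

lemma vertex_cut_separation:
  assumes "vertex_cut G X"
  obtains A B where "separates G X A B" "A \<noteq> {}" "B \<noteq> {}"
proof -
  define G' where "G' = del_verts G X"
  obtain u w where uw: "u \<in> verts G - X" "w \<in> verts G - X" "\<not> reachable G' u w"
    using assms by (auto simp: vertex_cut_def connected_hg_iff_reachable G'_def)
  define A where "A = {y \<in> verts G - X. reachable G' u y}"
  have "f \<subseteq> A \<or> f \<subseteq> verts G - X - A" if f: "f \<in> edges G" "f \<subseteq> verts G - X" for f
  proof -
    have "f \<in> edges G'" "f \<subseteq> verts G'" using f by (auto simp: G'_def)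
    then show ?thesis using reachable_through_edge[of G' u] f(2) by (auto simp: A_def)
  qed
  then have "separates G X A (verts G - X - A)"
    using assms by (auto simp: separates_def vertex_cut_def A_def)
  moreover have "u \<in> A" using uw reachable_refl[of u G'] by (auto simp: A_def G'_def)
  moreover have "w \<in> verts G - X - A" using uw by (auto simp: A_def)
  ultimately show ?thesis using that by blast
qed

text \<open>The trace of X on H' is a vertex cut of H'.\<close>
lemma kappa_le_card_separator:
  assumes sep: "separates G X A B" and "finite X" and H': "subhypergraph H' G"
    and a: "a \<in> verts H' \<inter> A" and b: "b \<in> verts H' \<inter> B"
  shows "kappa H' \<le> card X"
proof -
  define Y where "Y = verts H' \<inter> X"
  have "f \<subseteq> A \<or> f \<inter> A = {}" if f: "f \<in> edges H'" "f \<subseteq> verts H' - Y" for f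
  proof -
    have "f \<in> edges G" "f \<subseteq> verts G - X"
      using f H' by (auto simp: subhypergraph_def Y_def)
    then have "f \<subseteq> A \<or> f \<subseteq> B" using sep by (simp add: separates_def)
    then show ?thesis using sep by (auto simp: separates_def)
  qed
  moreover have "a \<in> verts H' - Y" "b \<in> verts H' - Y" "b \<notin> A"
    using a b sep by (auto simp: separates_def Y_def)
  ultimately have "vertex_cut H' Y"
    using a by (intro vertex_cutI[of _ _ a b A]) (auto simp: Y_def)
  then have "kappa H' \<le> card Y"
    using H' by (intro kappa_le_vertex_cut) (auto simp: subhypergraph_def hypergraph_def)
  also have "card Y \<le> card X" using \<open>finite X\<close> by (simp add: Y_def card_mono)
  finally show ?thesis .
qed

text \<open>Moving u (or w) into the separator makes the new edge e harmless; if neither move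
  leaves two sides, H' has at most |X| + 2 vertices.\<close>
lemma kappa_le_Suc_card_separator:
  assumes sep: "separates H X A B" and "finite X" and H': "subhypergraph H' (add_edge e H)"
    and u: "u \<in> e" "u \<in> A" "u \<in> verts H'" and w: "w \<in> e" "w \<in> B" "w \<in> verts H'"
  shows "kappa H' \<le> card X + 1"
proof -
  have sepA: "separates (add_edge e H) (insert u X) (A - {u}) B"
    and sepB: "separates (add_edge e H) (insert w X) (B - {w}) A"
    using separates_add_edge[OF separates_insert[OF sep u(2)], of e]
      separates_add_edge[OF separates_insert[OF separates_sym[OF sep] w(2)], of e] u(1) w(1) by auto
  have cards: "card (insert u X) \<le> card X + 1" "card (insert w X) \<le> card X + 1"
    using \<open>finite X\<close> by (simp_all add: card_insert_if)
  consider (a) a where "a \<in> verts H' \<inter> (A - {u})" | (b) b where "b \<in> verts H' \<inter> (B - {w})"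
    | (small) "verts H' \<subseteq> insert u (insert w (verts H' \<inter> X))"
  proof -
    have "verts H' \<subseteq> X \<union> A \<union> B"
      using sep H' by (auto simp: separates_def subhypergraph_def)
    then show ?thesis using that by blast
  qed
  then show ?thesis
  proof cases
    case a
    then have "kappa H' \<le> card (insert u X)"
      using kappa_le_card_separator[OF sepA _ H'] w \<open>finite X\<close> by blast
    then show ?thesis using cards by linarith
  next
    case b
    then have "kappa H' \<le> card (insert w X)"
      using kappa_le_card_separator[OF sepB _ H'] u \<open>finite X\<close> by blast
    then show ?thesis using cards by linarith
  next
    case small
    have fin: "finite (verts H')" using H' by (simp add: subhypergraph_def hypergraph_def)
    have "card (verts H') \<le> card (insert u (insert w (verts H' \<inter> X)))"
      using small \<open>finite X\<close> by (intro card_mono) auto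
    also have "\<dots> \<le> card X + 2"
      using \<open>finite X\<close> card_mono[of X "verts H' \<inter> X"] by (simp add: card_insert_if)
    finally show ?thesis using kappa_le_card_verts[OF fin] by linarith
  qed
qed

lemma kappa_le_if_card_verts_less:
  assumes G: "hypergraph G" "uniform r G" and small: "card (verts G) < k + r"
  shows "kappa G \<le> k"
proof -
  have fin: "finite (verts G)" using G by (simp add: hypergraph_def)
  show ?thesis
  proof (cases "card (verts G) \<le> k + 1")
    case True
    then show ?thesis using kappa_le_card_verts[OF fin] by linarith
  next
    case False
    then have k: "k \<le> card (verts G)" by linarith
    then obtain X where X: "X \<subseteq> verts G" "card X = k" "finite X"
      by (rule obtain_subset_with_card_n)
    have cardVX: "card (verts G - X) = card (verts G) - k"
      using X fin by (simp add: card_Diff_subset finite_subset)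
    then have "\<not> card (verts G - X) \<le> Suc 0" using False by linarith
    then obtain u w where uw: "u \<in> verts G - X" "w \<in> verts G - X" "u \<noteq> w"
      using card_le_Suc0_iff_eq[of "verts G - X"] fin by blast
    have "\<not> f \<subseteq> verts G - X" if "f \<in> edges G" for f
    proof
      assume "f \<subseteq> verts G - X"
      then have "card f \<le> card (verts G - X)" using fin by (simp add: card_mono)
      moreover have "card f = r" using that G(2) by (simp add: uniform_def)
      ultimately show False using small cardVX k by linarith
    qed
    then have "separates G X {u} (verts G - X - {u})"
      using X uw by (auto simp: separates_def)
    then have "kappa G \<le> card X"
      using uw kappa_le_card_separator[OF _ X(3) subhypergraph_refl[OF G(1)], of "{u}" _ u w]
      by auto
    then show ?thesis using X by simp
  qed
qed

subsection \<open>Vertex-k-maximal hypergraphs\<close>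

lemma vertex_k_maximal_witness:
  assumes km: "vertex_k_maximal k r H" and e: "e \<in> compl_edges r H" and "0 < r"
  obtains H' where "subhypergraph H' (add_edge e H)" "k < kappa H'" "e \<in> edges H'"
proof -
  have H: "hypergraph H" and eV: "e \<subseteq> verts H" "card e = r" "e \<notin> edges H"
    using km e by (auto simp: vertex_k_maximal_def compl_edges_def)
  then have "e \<noteq> {}" using \<open>0 < r\<close> by auto
  then have "hypergraph (add_edge e H)" using hypergraph_add_edge[OF H eV(1)] by simp
  then obtain H' where H': "subhypergraph H' (add_edge e H)" "kappa H' = kappa_bar (add_edge e H)"
    by (rule kappa_bar_attained)
  then have k: "k < kappa H'" using km e by (auto simp: vertex_k_maximal_def)
  have "e \<in> edges H'"
  proof (rule ccontr)
    assume "e \<notin> edges H'"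
    then have "subhypergraph H' H" using H' by (auto simp: subhypergraph_def)
    then have "kappa H' \<le> k"
      using kappa_le_kappa_bar[OF H] km by (fastforce simp: vertex_k_maximal_def)
    then show False using k by simp
  qed
  then show ?thesis using that H' k by blast
qed

text \<open>A witness that met the far side B of a separation of H + e would be cut by at most k
  vertices.\<close>
lemma vertex_k_maximal_witness_avoids_side:
  assumes km: "vertex_k_maximal k r H" and e: "e \<in> compl_edges r H" "e \<inter> A \<noteq> {}"
    and sep: "separates (add_edge e H) X A B" and X: "finite X" "card X \<le> k" and "0 < r"
  obtains H' where "subhypergraph H' (add_edge e H)" "k < kappa H'" "e \<subseteq> verts H'"
    "verts H' \<inter> B = {}"
proof -
  obtain H' where H': "subhypergraph H' (add_edge e H)" "k < kappa H'" "e \<in> edges H'"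
    using vertex_k_maximal_witness[OF km e(1) \<open>0 < r\<close>] .
  have eV: "e \<subseteq> verts H'" using H' by (simp add: subhypergraph_edge_subset)
  have "verts H' \<inter> B = {}"
  proof (rule ccontr)
    assume "verts H' \<inter> B \<noteq> {}"
    then obtain b where "b \<in> verts H' \<inter> B" by blast
    moreover obtain a where "a \<in> verts H' \<inter> A" using e(2) eV by blast
    ultimately have "kappa H' \<le> card X" using kappa_le_card_separator[OF sep X(1) H'(1)] by blast
    then show False using H'(2) X(2) by linarith
  qed
  then show ?thesis using that H' eV by blast
qed

lemma vertex_k_maximal_complete:
  assumes km: "vertex_k_maximal k r H" and "0 < r" and small: "card (verts H) < k + r"
  shows "edges H = {f. f \<subseteq> verts H \<and> card f = r}"
proof
  show "edges H \<subseteq> {f. f \<subseteq> verts H \<and> card f = r}"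
    using km by (auto simp: vertex_k_maximal_def hypergraph_def uniform_def)
  show "{f. f \<subseteq> verts H \<and> card f = r} \<subseteq> edges H"
  proof (rule ccontr)
    assume "\<not> ?thesis"
    then obtain e where e: "e \<in> compl_edges r H" by (auto simp: compl_edges_def)
    obtain H' where H': "subhypergraph H' (add_edge e H)" "k < kappa H'"
      using vertex_k_maximal_witness[OF km e \<open>0 < r\<close>] .
    have "finite (verts H)" "verts H' \<subseteq> verts H"
      using km H'(1) by (simp_all add: vertex_k_maximal_def hypergraph_def subhypergraph_def)
    then have "card (verts H') < k + r" using small card_mono[of "verts H" "verts H'"] by linarith
    moreover have "edges H' \<subseteq> insert e (edges H)" "hypergraph H'"
      using H'(1) by (simp_all add: subhypergraph_def)
    then have "uniform r H'"
      using km e unfolding vertex_k_maximal_def uniform_def compl_edges_def by blast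
    ultimately have "kappa H' \<le> k"
      using \<open>hypergraph H'\<close> kappa_le_if_card_verts_less by blast
    then show False using H'(2) by simp
  qed
qed

lemma vertex_k_maximal_del_verts_side:
  assumes km: "vertex_k_maximal k r H" and sep: "separates H X A B"
    and X: "card X \<le> k" and "k < r"
  shows "vertex_k_maximal k r (del_verts H B)"
proof -
  define H\<^sub>A where "H\<^sub>A = del_verts H B"
  have H: "hypergraph H" using km by (simp add: vertex_k_maximal_def)
  have finX: "finite X" using H sep by (auto simp: hypergraph_def separates_def intro: finite_subset)
  have HA: "hypergraph H\<^sub>A" "uniform r H\<^sub>A"
    using km hypergraph_del_verts[OF H] by (auto simp: H\<^sub>A_def vertex_k_maximal_def uniform_def)
  have "kappa H' \<le> k" if "subhypergraph H' H\<^sub>A" for H'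
  proof -
    have "subhypergraph H' H" using that by (auto simp: subhypergraph_def H\<^sub>A_def)
    then show ?thesis using kappa_le_kappa_bar[OF H] km by (fastforce simp: vertex_k_maximal_def)
  qed
  then have "kappa_bar H\<^sub>A \<le> k" using kappa_bar_attained[OF HA(1)] by metis
  moreover have "k < kappa_bar (add_edge e H\<^sub>A)" if e: "e \<in> compl_edges r H\<^sub>A" for e
  proof -
    have eA: "e \<subseteq> verts H - B" "card e = r" "e \<notin> edges H"
      using e by (auto simp: compl_edges_def H\<^sub>A_def)
    then have eC: "e \<in> compl_edges r H" by (auto simp: compl_edges_def)
    have "\<not> e \<subseteq> X" using eA(2) X \<open>k < r\<close> card_mono[OF finX, of e] by linarith
    then have meet: "e \<inter> A \<noteq> {}" using eA(1) sep by (auto simp: separates_def)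
    have sep': "separates (add_edge e H) X A B"
      using eA(1) sep by (intro separates_add_edge) (auto simp: separates_def)
    obtain H' where H': "subhypergraph H' (add_edge e H)" "k < kappa H'" "e \<subseteq> verts H'"
        "verts H' \<inter> B = {}"
      using vertex_k_maximal_witness_avoids_side[OF km eC meet sep' finX X] \<open>k < r\<close> by auto
    have "subhypergraph H' (add_edge e H\<^sub>A)"
      using H'(1,4) by (auto simp: subhypergraph_def H\<^sub>A_def hypergraph_def)
    moreover have "hypergraph (add_edge e H\<^sub>A)"
      using HA(1) eA \<open>k < r\<close> by (intro hypergraph_add_edge) (auto simp: H\<^sub>A_def)
    ultimately show ?thesis using kappa_le_kappa_bar H'(2) by (meson less_le_trans)
  qed
  ultimately show ?thesis using HA by (simp add: vertex_k_maximal_def H\<^sub>A_def Suc_le_eq)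
qed

definition crossing_sets :: "nat \<Rightarrow> 'a set \<Rightarrow> 'a set \<Rightarrow> 'a set \<Rightarrow> 'a set set" where
  "crossing_sets r X A B =
     {f. f \<subseteq> X \<union> A \<union> B \<and> card f = r \<and> f \<inter> X \<noteq> {} \<and> f \<inter> A \<noteq> {} \<and> f \<inter> B \<noteq> {}}"

lemma crossing_sets_subset_edges:
  assumes km: "vertex_k_maximal k r H" and sep: "separates H X A B"
    and X: "card X \<le> k" and "0 < r"
  shows "crossing_sets r X A B \<subseteq> edges H"
proof
  fix f assume f: "f \<in> crossing_sets r X A B"
  have finX: "finite X"
    using km sep by (auto simp: vertex_k_maximal_def hypergraph_def separates_def intro: finite_subset)
  show "f \<in> edges H"
  proof (rule ccontr)
    assume "f \<notin> edges H"
    then have fC: "f \<in> compl_edges r H"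
      using f sep by (auto simp: crossing_sets_def compl_edges_def separates_def)
    have meet: "f \<inter> A \<noteq> {}" "f \<inter> B \<noteq> {}" "f \<inter> X \<noteq> {}" using f by (auto simp: crossing_sets_def)
    have "separates (add_edge f H) X A B"
      using sep meet(3) by (intro separates_add_edge) auto
    then obtain H' where "f \<subseteq> verts H'" "verts H' \<inter> B = {}"
      using vertex_k_maximal_witness_avoids_side[OF km fC meet(1) _ finX X \<open>0 < r\<close>] by blast
    then show False using meet(2) by blast
  qed
qed

lemma separator_card_ge:
  assumes km: "vertex_k_maximal k r H" and sep: "separates H X A B" and "A \<noteq> {}" "B \<noteq> {}"
    and "2 \<le> r" and big: "r \<le> card (verts H - X)"
  shows "k \<le> card X"
proof (rule ccontr)
  assume small: "\<not> k \<le> card X"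
  have fin: "finite (verts H)" using km by (simp add: vertex_k_maximal_def hypergraph_def)
  have finX: "finite X" using fin sep by (auto simp: separates_def intro: finite_subset)
  obtain u w where uw: "u \<in> A" "w \<in> B" using \<open>A \<noteq> {}\<close> \<open>B \<noteq> {}\<close> by blast
  then have uwV: "u \<in> verts H - X" "w \<in> verts H - X" "u \<noteq> w"
    using sep by (auto simp: separates_def)
  then have "card (verts H - X - {u, w}) = card (verts H - X) - 2"
    using fin by (simp add: card_Diff_subset)
  then have "r - 2 \<le> card (verts H - X - {u, w})" using big by linarith
  then obtain Z where Z: "Z \<subseteq> verts H - X - {u, w}" "card Z = r - 2" "finite Z"
    by (rule obtain_subset_with_card_n)
  define e where "e = insert u (insert w Z)"
  have "u \<notin> Z" "w \<notin> Z" using Z(1) by auto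
  then have "card e = r" using Z(2,3) uwV(3) \<open>2 \<le> r\<close> by (simp add: e_def)
  moreover have eV: "e \<subseteq> verts H - X" using Z uwV by (auto simp: e_def)
  moreover have "e \<notin> edges H"
  proof
    assume "e \<in> edges H"
    then have "e \<subseteq> A \<or> e \<subseteq> B" using sep eV by (simp add: separates_def)
    then show False using uw sep by (auto simp: e_def separates_def)
  qed
  ultimately have "e \<in> compl_edges r H" by (auto simp: compl_edges_def)
  then obtain H' where H': "subhypergraph H' (add_edge e H)" "k < kappa H'" "e \<in> edges H'"
    using vertex_k_maximal_witness[OF km] \<open>2 \<le> r\<close> by auto
  have "u \<in> verts H'" "w \<in> verts H'"
    using subhypergraph_edge_subset[OF H'(1,3)] by (auto simp: e_def)
  then have "kappa H' \<le> card X + 1"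
    using kappa_le_Suc_card_separator[OF sep finX H'(1), of u w] uw by (simp add: e_def)
  then show False using H'(2) small by linarith
qed

lemma vertex_k_maximal_separation:
  assumes km: "vertex_k_maximal k r H" and "2 \<le> r" and big: "k + r \<le> card (verts H)"
  obtains X A B where "separates H X A B" "A \<noteq> {}" "B \<noteq> {}" "card X = k"
proof -
  have H: "hypergraph H" and fin: "finite (verts H)"
    using km by (simp_all add: vertex_k_maximal_def hypergraph_def)
  have "kappa H \<le> k"
    using kappa_le_kappa_bar[OF H subhypergraph_refl[OF H]] km by (simp add: vertex_k_maximal_def)
  then have "kappa H < card (verts H) - 1" using big \<open>2 \<le> r\<close> by linarith
  then obtain X where X: "vertex_cut H X" "card X = kappa H"
    using minimum_vertex_cut_exists[OF fin] by blast
  obtain A B where AB: "separates H X A B" "A \<noteq> {}" "B \<noteq> {}"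
    using vertex_cut_separation[OF X(1)] by blast
  have "X \<subseteq> verts H" using X(1) by (simp add: vertex_cut_def)
  then have "card (verts H - X) = card (verts H) - card X"
    using fin by (simp add: card_Diff_subset finite_subset)
  then have "r \<le> card (verts H - X)" using big X(2) \<open>kappa H \<le> k\<close> by linarith
  then have "k \<le> card X" using separator_card_ge[OF km AB] \<open>2 \<le> r\<close> by blast
  then show ?thesis using that AB X(2) \<open>kappa H \<le> k\<close> by simp
qed

subsection \<open>Counting\<close>

definition r_sets_meeting :: "nat \<Rightarrow> 'a set \<Rightarrow> 'a set \<Rightarrow> 'a set set" where
  "r_sets_meeting r U X = {f. f \<subseteq> U \<and> card f = r \<and> f \<inter> X \<noteq> {}}"

lemma card_r_sets_meeting:
  assumes "finite U" "X \<subseteq> U"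
  shows "card (r_sets_meeting r U X) = (card U choose r) - ((card U - card X) choose r)"
proof -
  have "r_sets_meeting r U X = {f. f \<subseteq> U \<and> card f = r} - {f. f \<subseteq> U - X \<and> card f = r}"
    by (auto simp: r_sets_meeting_def)
  moreover have "{f. f \<subseteq> U - X \<and> card f = r} \<subseteq> {f. f \<subseteq> U \<and> card f = r}" by auto
  moreover have "finite {f. f \<subseteq> U \<and> card f = r}" using assms(1) by simp
  ultimately have "card (r_sets_meeting r U X)
      = card {f. f \<subseteq> U \<and> card f = r} - card {f. f \<subseteq> U - X \<and> card f = r}"
    by (simp add: card_Diff_subset finite_subset)
  then show ?thesis using assms by (simp add: n_subsets card_Diff_subset finite_subset)
qed

text \<open>The parts avoiding B and avoiding A are disjoint because no r-set fits into X.\<close>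
lemma card_split_crossing:
  assumes sep: "separates H X A B" and fin: "finite (verts H)" and "card X < r"
    and F: "\<And>f. f \<in> F \<Longrightarrow> f \<subseteq> verts H \<and> card f = r \<and> (f \<subseteq> verts H - X \<longrightarrow> f \<subseteq> A \<or> f \<subseteq> B)"
    and C: "crossing_sets r X A B \<subseteq> F"
  shows "card F = card {f \<in> F. f \<subseteq> verts H - B} + card {f \<in> F. f \<subseteq> verts H - A}
    + card (crossing_sets r X A B)"
proof -
  have V: "verts H = X \<union> A \<union> B" "X \<inter> A = {}" "X \<inter> B = {}" "A \<inter> B = {}"
    using sep by (auto simp: separates_def)
  have "f \<in> crossing_sets r X A B"
    if f: "f \<in> F" "\<not> f \<subseteq> verts H - B" "\<not> f \<subseteq> verts H - A" for f
  proof -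
    have "f \<subseteq> X \<union> A \<union> B" "card f = r" "f \<subseteq> verts H - X \<longrightarrow> f \<subseteq> A \<or> f \<subseteq> B"
      using F[OF f(1)] V by auto
    moreover have "f \<inter> A \<noteq> {}" "f \<inter> B \<noteq> {}" using f(2,3) calculation(1) V by auto
    ultimately show ?thesis using V unfolding crossing_sets_def by auto
  qed
  then have split: "F = {f \<in> F. f \<subseteq> verts H - B} \<union> {f \<in> F. f \<subseteq> verts H - A} \<union> crossing_sets r X A B"
    using C by auto
  have "F \<subseteq> Pow (verts H)" using F by blast
  then have "finite F" using fin by (simp add: finite_subset)
  moreover have "finite (crossing_sets r X A B)" using C \<open>finite F\<close> by (rule finite_subset)
  moreover have "\<not> f \<subseteq> X" if "f \<in> F" for f
  proof
    assume "f \<subseteq> X"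
    moreover have "finite X" using fin V(1) by simp
    ultimately have "card f \<le> card X" by (simp add: card_mono)
    then show False using F[OF that] \<open>card X < r\<close> by simp
  qed
  then have "{f \<in> F. f \<subseteq> verts H - B} \<inter> {f \<in> F. f \<subseteq> verts H - A} = {}" using V by blast
  moreover have "({f \<in> F. f \<subseteq> verts H - B} \<union> {f \<in> F. f \<subseteq> verts H - A}) \<inter> crossing_sets r X A B = {}"
    by (auto simp: crossing_sets_def)
  ultimately show ?thesis by (subst split) (simp add: card_Un_disjoint)
qed

lemma card_edges_from_sides:
  assumes km: "vertex_k_maximal k r H" and sep: "separates H X A B" and X: "card X = k" "k < r"
    and sides: "card (edges (del_verts H B)) = card (r_sets_meeting r (verts H - B) X)"
      "card (edges (del_verts H A)) = card (r_sets_meeting r (verts H - A) X)"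
  shows "card (edges H) = (card (verts H) choose r) - ((card (verts H) - k) choose r)"
proof -
  have H: "hypergraph H" "uniform r H" and fin: "finite (verts H)"
    using km by (simp_all add: vertex_k_maximal_def hypergraph_def)
  have "card X < r" using X by simp
  have C: "crossing_sets r X A B \<subseteq> edges H"
    using crossing_sets_subset_edges[OF km sep] X by simp
  have "card (edges H) = card (edges (del_verts H B)) + card (edges (del_verts H A))
      + card (crossing_sets r X A B)"
    using card_split_crossing[OF sep fin \<open>card X < r\<close> _ C] H sep
    by (simp add: hypergraph_def uniform_def separates_def)
  also have "\<dots> = card (r_sets_meeting r (verts H) X)"
  proof -
    have "crossing_sets r X A B \<subseteq> r_sets_meeting r (verts H) X"
      using sep by (auto simp: crossing_sets_def r_sets_meeting_def separates_def)
    moreover have "f \<subseteq> verts H \<and> card f = r \<and> (f \<subseteq> verts H - X \<longrightarrow> f \<subseteq> A \<or> f \<subseteq> B)"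
      if "f \<in> r_sets_meeting r (verts H) X" for f
      using that by (auto simp: r_sets_meeting_def)
    moreover have "r_sets_meeting r (verts H - S) X = {f \<in> r_sets_meeting r (verts H) X. f \<subseteq> verts H - S}"
      for S by (auto simp: r_sets_meeting_def)
    ultimately show ?thesis
      using card_split_crossing[OF sep fin \<open>card X < r\<close>] sides by simp
  qed
  also have "\<dots> = (card (verts H) choose r) - ((card (verts H) - k) choose r)"
    using sep fin X by (simp add: card_r_sets_meeting separates_def)
  finally show ?thesis .
qed

theorem card_edges_vertex_k_maximal:
  assumes "2 \<le> r" "k < r" "vertex_k_maximal k r H"
  shows "card (edges H) = (card (verts H) choose r) - ((card (verts H) - k) choose r)"
  using assms(3)
proof (induction "card (verts H)" arbitrary: H rule: less_induct)
  case less
  have fin: "finite (verts H)" using less.prems by (simp add: vertex_k_maximal_def hypergraph_def)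
  show ?case
  proof (cases "card (verts H) < k + r")
    case True
    then have "edges H = {f. f \<subseteq> verts H \<and> card f = r}"
      using vertex_k_maximal_complete[OF less.prems] \<open>2 \<le> r\<close> by simp
    moreover have "(card (verts H) - k) choose r = 0"
      using True \<open>2 \<le> r\<close> by (intro binomial_eq_0) arith
    ultimately show ?thesis using fin by (simp add: n_subsets del: binomial_eq_0_iff)
  next
    case False
    then have "k + r \<le> card (verts H)" by simp
    then obtain X A B where sep: "separates H X A B" "A \<noteq> {}" "B \<noteq> {}" and X: "card X = k"
      using vertex_k_maximal_separation[OF less.prems \<open>2 \<le> r\<close>] by blast
    have side: "card (edges (del_verts H B')) = card (r_sets_meeting r (verts H - B') X)"
      if sep': "separates H X A' B'" "B' \<noteq> {}" for A' B'
    proof -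
      have "B' \<subseteq> verts H" and XB': "X \<subseteq> verts H - B'" using sep'(1) by (auto simp: separates_def)
      then have smaller: "card (verts H - B') < card (verts H)"
        using sep'(2) fin by (intro psubset_card_mono) auto
      have "vertex_k_maximal k r (del_verts H B')"
        using vertex_k_maximal_del_verts_side[OF less.prems sep'(1)] X \<open>k < r\<close> by simp
      then have "card (edges (del_verts H B'))
          = (card (verts H - B') choose r) - ((card (verts H - B') - k) choose r)"
        using less.hyps[of "del_verts H B'"] smaller by simp
      also have "\<dots> = card (r_sets_meeting r (verts H - B') X)"
        using card_r_sets_meeting[of "verts H - B'" X r] XB' fin X by simp
      finally show ?thesis .
    qed
    show ?thesis
      using card_edges_from_sides[OF less.prems sep(1) X \<open>k < r\<close>]
        side[OF sep(1,3)] side[OF separates_sym[OF sep(1)] sep(2)] by blast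
  qed
qed

theorem corollary4p3:
  fixes n k r :: nat and H :: "'a hgraph"
  assumes "k \<ge> 2" and "r \<ge> 2" and "n \<ge> 2 * k" and "k < r"
    and "hypergraph H" and "uniform r H" and "card (verts H) = n"
    and "vertex_k_maximal k r H"
  shows "card (edges H) = (n choose r) - ((n - k) choose r)"
  using card_edges_vertex_k_maximal[OF \<open>r \<ge> 2\<close> \<open>k < r\<close> \<open>vertex_k_maximal k r H\<close>]
    \<open>card (verts H) = n\<close> by simp

end
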